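(* For $\beta\in\mathbb{N}$, $l,n\in\mathbb{N}$, $r\in\mathbb{Z}$ let $$T_{l,\beta}^{(2)}(n,r)=\frac{l!\,2^l}{\lfloor n/2^{\beta-1}\rfloor!}\sum_{k\equiv r\ (\mathrm{mod}\ 2^{\beta})}\binom nk(-1)^k\binom{(k-r)/2^{\beta}}l.$$ Let $\alpha,c,d,e\in\mathbb{N}$ with $d<2^e$. Then $$T_{l,\alpha+1}^{(2)}\big(2^{\alpha}(2^e+d),\,2^{\alpha}c\big)\equiv\delta_{l,d}\pmod 2\quad\text{for all } l=0,\ldots,d,$$ where $\delta_{l,d}$ is the Kronecker delta.
   Context: The sum runs over all integers $k\equiv r\pmod{2^\beta}$ with $\binom nk=0$ unless $0\le k\le n$; $\binom xl=x(x-1)\cdots(x-l+1)/l!$. For rationals $u,v$, $u\equiv v\pmod 2$ means $\operatorname{ord}_2(u-v)\ge1$. *)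

theory Defs
  imports Complex_Main "HOL-Number_Theory.Cong"
begin

definition cong2_rat :: "rat \<Rightarrow> rat \<Rightarrow> bool" where
  "cong2_rat u v \<longleftrightarrow> (\<exists>a b :: int. odd b \<and> u - v = of_int (2 * a) / of_int b)"

text \<open>T^{(2)}_{l,beta}(n,r). The sum runs over k in {0..n} with k = r (mod 2^beta);
  for such k, (k - r)/2^beta is an integer.\<close>
definition T2 :: "nat \<Rightarrow> nat \<Rightarrow> nat \<Rightarrow> int \<Rightarrow> rat" where
  "T2 l \<beta> n r =
     (of_nat (fact l * 2 ^ l) / of_nat (fact (n div 2 ^ (\<beta> - 1)))) *
     (\<Sum>k \<in> {k \<in> {0..n}. [int k = r] (mod 2 ^ \<beta>)}.
        of_nat (n choose k) * (-1) ^ k *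
        ((of_int ((int k - r) div 2 ^ \<beta>) :: rat) gchoose l))"

end

theory Submission
  imports Defs "HOL-Computational_Algebra.Polynomial"
begin

text \<open>
  Write m = 2^e + d. The sum defining T is a fixed linear functional of the coefficients
  of (1 - X)^(2^\<alpha> m), and (1 - X)^(2^\<alpha>) = 1 + X^(2^\<alpha>) + 2h with h integral. Expand
  ((1 + X^(2^\<alpha>)) + 2h)^m binomially and divide by m!: the term with i < m factors
  1 + X^(2^\<alpha>) carries 2^(m-i)/(m-i)!, which is even in Z_(2), and the functional applied
  to (1 + X^(2^\<alpha>))^i q is i! times an element of Z_(2). So modulo 2 only (1 + X^(2^\<alpha>))^m
  survives, and T becomes S/m!, where S is the sum of C(m,j) (j - c) (j - c - 2) ...
  (j - c - 2l + 2) over the j \<le> m with j \<equiv> c (mod 2).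

  2S is the plain plus or minus the alternating binomial sum of a polynomial of degree l
  in j. The alternating sum vanishes since l < m, and a recursion in (m, l) writes S/m!
  as the sum over b \<le> l of \<beta>_b 2^(m-b-1)/(m-b)! with integers \<beta>_b and \<beta>_l = 1.
  By Legendre's formula 2^(k-1)/k! is congruent to 1 modulo 2 if k is a power of two
  and to 0 otherwise. As m - b = 2^e + (d - b), only b = d contributes, leaving \<delta>_{l,d}.
\<close>

section \<open>The local ring \<open>\<int>\<^sub>(\<^sub>2\<^sub>)\<close> and congruences modulo 2\<close>

definition Z2 :: "rat set" where
  "Z2 = {q. \<exists>a b :: int. odd b \<and> q = of_int a / of_int b}"

lemma Z2_of_int [simp]: "of_int a \<in> Z2"
  unfolding Z2_def by (intro CollectI exI[of _ a] exI[of _ 1]) simp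

lemma Z2_0 [simp]: "0 \<in> Z2"
  using Z2_of_int[of 0] by simp

lemma Z2_of_nat [simp]: "of_nat n \<in> Z2"
  using Z2_of_int[of "int n"] by simp

lemma Z2_numeral_power [simp]: "numeral k ^ n \<in> Z2"
  using Z2_of_int[of "numeral k ^ n"] by simp

lemma Z2_Ints: "x \<in> \<int> \<Longrightarrow> x \<in> Z2"
  by (auto elim!: Ints_cases)

lemma Z2_inverse_odd: "odd u \<Longrightarrow> 1 / of_int u \<in> Z2"
  unfolding Z2_def by (intro CollectI exI[of _ 1] exI[of _ u]) simp

lemma Z2_add:
  assumes "x \<in> Z2" "y \<in> Z2"
  shows "x + y \<in> Z2"
proof -
  obtain a b c d :: int where "odd b" "x = of_int a / of_int b" "odd d" "y = of_int c / of_int d"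
    using assms unfolding Z2_def by blast
  moreover have "of_int b \<noteq> (0::rat)" "of_int d \<noteq> (0::rat)"
    using \<open>odd b\<close> \<open>odd d\<close> by auto
  ultimately have "x + y = of_int (a * d + c * b) / of_int (b * d)" "odd (b * d)"
    by (simp_all add: field_simps)
  then show ?thesis unfolding Z2_def by blast
qed

lemma Z2_mult:
  assumes "x \<in> Z2" "y \<in> Z2"
  shows "x * y \<in> Z2"
proof -
  obtain a b c d :: int where "odd b" "x = of_int a / of_int b" "odd d" "y = of_int c / of_int d"
    using assms unfolding Z2_def by blast
  then have "x * y = of_int (a * c) / of_int (b * d)" "odd (b * d)"
    by simp_all
  then show ?thesis unfolding Z2_def by blast
qed

lemma Z2_sum: "(\<And>i. i \<in> A \<Longrightarrow> f i \<in> Z2) \<Longrightarrow> sum f A \<in> Z2"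
  by (induction A rule: infinite_finite_induct) (auto intro: Z2_add)

lemma cong2_rat_iff: "cong2_rat u v \<longleftrightarrow> (u - v) / 2 \<in> Z2"
proof
  assume "cong2_rat u v"
  then obtain a b :: int where "odd b" "u - v = of_int (2 * a) / of_int b"
    unfolding cong2_rat_def by blast
  then have "(u - v) / 2 = of_int a / of_int b" by simp
  with \<open>odd b\<close> show "(u - v) / 2 \<in> Z2" unfolding Z2_def by blast
next
  assume "(u - v) / 2 \<in> Z2"
  then obtain a b :: int where "odd b" "(u - v) / 2 = of_int a / of_int b"
    unfolding Z2_def by blast
  then have "u - v = of_int (2 * a) / of_int b" by (simp add: field_simps)
  with \<open>odd b\<close> show "cong2_rat u v" unfolding cong2_rat_def by blast
qed

lemma cong2_rat_refl [simp]: "cong2_rat u u"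
  by (simp add: cong2_rat_iff)

lemma cong2_rat_double: "z \<in> Z2 \<Longrightarrow> cong2_rat (2 * z) 0"
  by (simp add: cong2_rat_iff)

lemma cong2_rat_trans [trans]: "cong2_rat u v \<Longrightarrow> cong2_rat v w \<Longrightarrow> cong2_rat u w"
  using Z2_add[of "(u - v) / 2" "(v - w) / 2"] by (simp add: cong2_rat_iff diff_divide_distrib)

lemma cong2_rat_add: "cong2_rat u v \<Longrightarrow> cong2_rat u' v' \<Longrightarrow> cong2_rat (u + u') (v + v')"
  using Z2_add[of "(u - v) / 2" "(u' - v') / 2"]
  by (simp add: cong2_rat_iff diff_divide_distrib add_divide_distrib algebra_simps)

lemma cong2_rat_sum:
  "(\<And>i. i \<in> A \<Longrightarrow> cong2_rat (f i) (g i)) \<Longrightarrow> cong2_rat (sum f A) (sum g A)"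
  by (induction A rule: infinite_finite_induct)
    (auto simp: cong2_rat_iff intro: cong2_rat_add[unfolded cong2_rat_iff])

lemma cong2_rat_mult_left: "a \<in> Z2 \<Longrightarrow> cong2_rat u v \<Longrightarrow> cong2_rat (a * u) (a * v)"
  using Z2_mult[of a "(u - v) / 2"] by (simp add: cong2_rat_iff right_diff_distrib)

section \<open>Legendre's formula at the prime 2\<close>

fun bin_digit_sum :: "nat \<Rightarrow> nat" where
  "bin_digit_sum n = (if n = 0 then 0 else n mod 2 + bin_digit_sum (n div 2))"

declare bin_digit_sum.simps [simp del]

lemma bin_digit_sum_0 [simp]: "bin_digit_sum 0 = 0"
  by (simp add: bin_digit_sum.simps)

lemma bin_digit_sum_double: "bin_digit_sum (2 * n) = bin_digit_sum n"
  by (cases "n = 0") (simp_all add: bin_digit_sum.simps[of "2 * n"])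

lemma bin_digit_sum_double_Suc: "bin_digit_sum (Suc (2 * n)) = Suc (bin_digit_sum n)"
  by (simp add: bin_digit_sum.simps[of "Suc (2 * n)"])

lemma bin_digit_sum_le: "bin_digit_sum n \<le> n"
  by (induction n rule: bin_digit_sum.induct) (subst bin_digit_sum.simps, auto)

lemma bin_digit_sum_pos: "n \<noteq> 0 \<Longrightarrow> bin_digit_sum n \<noteq> 0"
  by (induction n rule: bin_digit_sum.induct) (subst bin_digit_sum.simps, auto, presburger)

lemma bin_digit_sum_two_pow_add: "d < 2 ^ e \<Longrightarrow> bin_digit_sum (2 ^ e + d) = Suc (bin_digit_sum d)"
proof (induction e arbitrary: d)
  case 0
  then show ?case by (simp add: bin_digit_sum.simps)
next
  case (Suc e)
  then have IH: "bin_digit_sum (2 ^ e + d div 2) = Suc (bin_digit_sum (d div 2))"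
    by simp
  show ?case
  proof (cases "even d")
    case True
    then have "2 ^ Suc e + d = 2 * (2 ^ e + d div 2)" "d = 2 * (d div 2)"
      by auto
    then show ?thesis using IH by (metis bin_digit_sum_double)
  next
    case False
    then have "d = Suc (2 * (d div 2))"
      by presburger
    then have "2 ^ Suc e + d = Suc (2 * (2 ^ e + d div 2))" "d = Suc (2 * (d div 2))"
      by simp_all
    then show ?thesis using IH by (metis bin_digit_sum_double_Suc)
  qed
qed

lemma fact_double: "\<exists>u. odd u \<and> fact (2 * k) = (2::nat) ^ k * fact k * u"
proof (induction k)
  case (Suc k)
  then obtain u where u: "odd u" "fact (2 * k) = (2::nat) ^ k * fact k * u"
    by blast
  have "fact (2 * Suc k) = (2 * k + 2) * ((2 * k + 1) * fact (2 * k))"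
    by (simp add: fact_Suc algebra_simps)
  also have "\<dots> = (2 * k + 2) * ((2 * k + 1) * (2 ^ k * fact k * u))"
    by (simp only: u(2))
  also have "\<dots> = 2 ^ Suc k * fact (Suc k) * ((2 * k + 1) * u)"
    by (simp add: algebra_simps)
  finally show ?case using u(1) by (intro exI[of _ "(2 * k + 1) * u"]) simp
qed simp

lemma fact_eq_two_pow_times_odd: "\<exists>u. odd u \<and> fact n = (2::nat) ^ (n - bin_digit_sum n) * u"
proof (induction n rule: less_induct)
  case (less n)
  show ?case
  proof (cases "n = 0")
    case False
    define k where "k = n div 2"
    have "k < n"
      using False k_def by simp
    then obtain u where u: "odd u" "fact k = (2::nat) ^ (k - bin_digit_sum k) * u"
      using less by blast
    obtain v where v: "odd v" "fact (2 * k) = (2::nat) ^ k * fact k * v"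
      using fact_double by blast
    have "2 * k - bin_digit_sum k = k + (k - bin_digit_sum k)"
      using bin_digit_sum_le[of k] by simp
    then have even_case: "fact (2 * k) = (2::nat) ^ (2 * k - bin_digit_sum k) * (u * v)"
      using u v by (simp add: power_add)
    show ?thesis
    proof (cases "even n")
      case True
      then have "n = 2 * k"
        unfolding k_def by simp
      then show ?thesis
        using even_case u(1) v(1) by (auto simp: bin_digit_sum_double)
    next
      case False
      then have n: "n = Suc (2 * k)"
        unfolding k_def by (simp add: odd_two_times_div_two_succ)
      have "n - bin_digit_sum n = 2 * k - bin_digit_sum k"
        by (simp add: n bin_digit_sum_double_Suc)
      then have "fact n = (2::nat) ^ (n - bin_digit_sum n) * (n * (u * v))"
        using even_case by (simp add: n) (simp add: algebra_simps)
      then show ?thesis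
        using False u(1) v(1) by auto
    qed
  qed simp
qed

lemma two_pow_div_fact_Z2:
  assumes "k \<le> bin_digit_sum n"
  shows "2 ^ (n - k) / fact n \<in> Z2"
proof -
  obtain u where u: "odd u" "fact n = (2::nat) ^ (n - bin_digit_sum n) * u"
    using fact_eq_two_pow_times_odd by blast
  have "n - k = (n - bin_digit_sum n) + (bin_digit_sum n - k)"
    using assms bin_digit_sum_le[of n] by simp
  moreover have "(fact n :: rat) = 2 ^ (n - bin_digit_sum n) * of_nat u"
    using arg_cong[OF u(2), of "of_nat :: nat \<Rightarrow> rat"] by simp
  ultimately have "(2::rat) ^ (n - k) / fact n = 2 ^ (bin_digit_sum n - k) * (1 / of_int (int u))"
    by (simp add: power_add)
  also have "\<dots> \<in> Z2"
    using u(1) by (intro Z2_mult Z2_inverse_odd) simp_all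
  finally show ?thesis .
qed

lemma two_pow_pred_div_fact_Z2: "n \<noteq> 0 \<Longrightarrow> 2 ^ (n - 1) / fact n \<in> Z2"
  using two_pow_div_fact_Z2[of 1 n] bin_digit_sum_pos[of n] by simp

lemma two_pow_div_fact_Z2_if_le:
  assumes "i \<le> l"
  shows "2 ^ l / fact i \<in> Z2"
proof (cases "i = 0")
  case False
  have "(2::rat) ^ l / fact i = 2 ^ (l - (i - 1)) * (2 ^ (i - 1) / fact i)"
    using assms False by (simp add: power_add[symmetric])
  also have "\<dots> \<in> Z2"
    using two_pow_pred_div_fact_Z2[OF False] by (intro Z2_mult) simp_all
  finally show ?thesis .
qed simp

lemma cong2_two_pow_pred_div_fact:
  assumes "n \<noteq> 0"
  shows "cong2_rat (2 ^ (n - 1) / fact n) (if bin_digit_sum n = 1 then 1 else 0)"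
proof (cases "bin_digit_sum n = 1")
  case True
  obtain u where u: "odd u" "fact n = (2::nat) ^ (n - 1) * u"
    using fact_eq_two_pow_times_odd[of n] True by auto
  have "u \<noteq> 0"
    using odd_pos[OF u(1)] by simp
  then have unit: "2 ^ (n - 1) / (fact n :: rat) = 1 / of_int (int u)"
    using arg_cong[OF u(2), of "of_nat :: nat \<Rightarrow> rat"] by simp
  have "even (1 - int u)"
    using u(1) by simp
  then obtain q where "1 - int u = 2 * q" ..
  then have "1 - of_int (int u) = 2 * (of_int q :: rat)"
    by (metis of_int_1 of_int_diff of_int_mult of_int_numeral)
  moreover have "(1 / of_int (int u) - 1) / 2 = (1 - of_int (int u)) / (2 * of_int (int u) :: rat)"
    using \<open>u \<noteq> 0\<close> by (simp add: field_simps)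
  ultimately have "(1 / of_int (int u) - 1) / 2 = of_int q / (of_int (int u) :: rat)"
    by simp
  then have "(2 ^ (n - 1) / fact n - 1) / 2 \<in> Z2"
    using u(1) unfolding unit Z2_def by (intro CollectI exI[of _ q] exI[of _ "int u"]) simp
  then show ?thesis
    using True by (simp add: cong2_rat_iff)
next
  case False
  then have "2 \<le> bin_digit_sum n"
    using bin_digit_sum_pos[OF assms] by simp
  moreover have "n - 1 = Suc (n - 2)"
    using calculation bin_digit_sum_le[of n] by simp
  ultimately show ?thesis
    using False two_pow_div_fact_Z2[of 2 n] by (simp add: cong2_rat_iff)
qed

lemma cong2_two_pow_div_fact_mult:
  assumes "k \<noteq> 0" "z \<in> Z2"
  shows "cong2_rat (2 ^ k / fact k * z) 0"
proof -
  have "2 ^ k / fact k * z = 2 * (2 ^ (k - 1) / fact k * z)"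
    using assms(1) by (simp flip: power_Suc)
  then show ?thesis
    by (metis cong2_rat_double Z2_mult two_pow_pred_div_fact_Z2 assms)
qed

section \<open>Binomial sums of step-two falling factorials\<close>

definition ffact2 :: "nat \<Rightarrow> 'a::comm_ring_1 \<Rightarrow> 'a" where
  "ffact2 l x = (\<Prod>u<l. x - 2 * of_nat u)"

lemma ffact2_0 [simp]: "ffact2 0 x = 1"
  by (simp add: ffact2_def)

lemma ffact2_Suc: "ffact2 (Suc l) x = ffact2 l x * (x - 2 * of_nat l)"
  by (simp add: ffact2_def)

lemma ffact2_double: "ffact2 l (2 * y) = 2 ^ l * (\<Prod>u<l. y - of_nat u)"
proof -
  have "ffact2 l (2 * y) = (\<Prod>u<l. 2 * (y - of_nat u))"
    by (simp add: ffact2_def right_diff_distrib)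
  also have "\<dots> = (\<Prod>u<l. 2) * (\<Prod>u<l. y - of_nat u)"
    by (rule prod.distrib)
  finally show ?thesis
    by simp
qed

lemma sum_binomial_times_index:
  fixes f :: "nat \<Rightarrow> 'a::comm_semiring_1"
  shows "(\<Sum>j\<le>Suc i. of_nat (Suc i choose j) * (of_nat j * f j)) =
         of_nat (Suc i) * (\<Sum>j\<le>i. of_nat (i choose j) * f (Suc j))"
proof -
  have "(\<Sum>j\<le>Suc i. of_nat (Suc i choose j) * (of_nat j * f j)) =
        (\<Sum>j\<le>i. of_nat (Suc i choose Suc j) * of_nat (Suc j) * f (Suc j))"
    by (subst sum.atMost_Suc_shift) (simp add: mult.assoc)
  also have "\<dots> = (\<Sum>j\<le>i. of_nat (Suc i) * (of_nat (i choose j) * f (Suc j)))"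
  proof (intro sum.cong refl)
    fix j
    have "of_nat (Suc i choose Suc j) * of_nat (Suc j) = (of_nat (Suc i) * of_nat (i choose j) :: 'a)"
      using Suc_times_binomial[of j i] by (metis mult.commute of_nat_mult)
    then show "of_nat (Suc i choose Suc j) * of_nat (Suc j) * f (Suc j) =
               of_nat (Suc i) * (of_nat (i choose j) * f (Suc j))"
      by (simp add: mult.assoc)
  qed
  finally show ?thesis
    by (simp add: sum_distrib_left)
qed

definition binom_ffact2_sum :: "rat \<Rightarrow> nat \<Rightarrow> int \<Rightarrow> nat \<Rightarrow> rat" where
  "binom_ffact2_sum \<epsilon> i x l =
     (\<Sum>j\<le>i. of_nat (i choose j) * \<epsilon> ^ j * ffact2 l (of_int (int j + x)))"

definition even_binom_ffact2_sum :: "nat \<Rightarrow> int \<Rightarrow> nat \<Rightarrow> rat" where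
  "even_binom_ffact2_sum i x l =
     (\<Sum>j\<le>i. if even (int j + x) then of_nat (i choose j) * ffact2 l (of_int (int j + x)) else 0)"

lemma binom_ffact2_sum_Suc_Suc:
  "binom_ffact2_sum \<epsilon> (Suc i) x (Suc l) =
     of_nat (Suc i) * \<epsilon> * binom_ffact2_sum \<epsilon> i (x + 1) l
     + (of_int x - 2 * of_nat l) * binom_ffact2_sum \<epsilon> (Suc i) x l"
proof -
  define F where "F j = \<epsilon> ^ j * ffact2 l (of_int (int j + x) :: rat)" for j
  have "binom_ffact2_sum \<epsilon> (Suc i) x (Suc l) =
        (\<Sum>j\<le>Suc i. of_nat (Suc i choose j) * (of_nat j * F j))
        + (of_int x - 2 * of_nat l) * binom_ffact2_sum \<epsilon> (Suc i) x l"
    unfolding binom_ffact2_sum_def ffact2_Suc F_def sum_distrib_left sum.distrib[symmetric]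
    by (intro sum.cong refl) (simp add: algebra_simps)
  also have "(\<Sum>j\<le>Suc i. of_nat (Suc i choose j) * (of_nat j * F j)) =
             of_nat (Suc i) * \<epsilon> * binom_ffact2_sum \<epsilon> i (x + 1) l"
    unfolding sum_binomial_times_index binom_ffact2_sum_def F_def sum_distrib_left
    by (simp add: algebra_simps)
  finally show ?thesis .
qed

lemma binom_ffact2_sum_alternating_eq_0: "l < i \<Longrightarrow> binom_ffact2_sum (-1) i x l = 0"
proof (induction l arbitrary: i x)
  case 0
  then show ?case
    using choose_alternating_sum[of i, where ?'a = rat]
    by (simp add: binom_ffact2_sum_def mult.commute)
next
  case (Suc l)
  then obtain i' where "i = Suc i'"
    by (cases i) auto
  with Suc show ?case
    by (simp add: binom_ffact2_sum_Suc_Suc)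
qed

lemma binom_ffact2_sum_expansion:
  "l \<le> i \<Longrightarrow> \<exists>\<beta>::nat \<Rightarrow> int. \<beta> l = 1 \<and>
     binom_ffact2_sum 1 i x l / fact i = (\<Sum>b\<le>l. of_int (\<beta> b) * 2 ^ (i - b) / fact (i - b))"
proof (induction l arbitrary: i x)
  case 0
  have "binom_ffact2_sum 1 i x 0 = 2 ^ i"
    using choose_row_sum[of i] unfolding binom_ffact2_sum_def by (simp flip: of_nat_sum)
  then show ?case
    by (intro exI[of _ "\<lambda>_. 1"]) simp
next
  case (Suc l)
  then obtain i' where i: "i = Suc i'"
    by (cases i) auto
  define F where "F b = (2::rat) ^ (i - b) / fact (i - b)" for b
  obtain \<beta>1 where \<beta>1: "\<beta>1 l = 1"
    "binom_ffact2_sum 1 i' (x + 1) l / fact i' = (\<Sum>b\<le>l. of_int (\<beta>1 b) * F (Suc b))"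
    using Suc.IH[of i' "x + 1"] Suc.prems by (auto simp: i F_def)
  obtain \<beta>2 where \<beta>2: "binom_ffact2_sum 1 i x l / fact i = (\<Sum>b\<le>l. of_int (\<beta>2 b) * F b)"
    using Suc.IH[of i x] Suc.prems by (auto simp: F_def)
  define \<beta> where "\<beta> b = (if b = 0 then 0 else \<beta>1 (b - 1))
    + (x - 2 * int l) * (if b \<le> l then \<beta>2 b else 0)" for b
  have "binom_ffact2_sum 1 i x (Suc l) / fact i =
        binom_ffact2_sum 1 i' (x + 1) l / fact i'
        + (of_int x - 2 * of_nat l) * (binom_ffact2_sum 1 i x l / fact i)"
    by (simp add: i binom_ffact2_sum_Suc_Suc add_divide_distrib del: of_nat_Suc)
  also have "\<dots> = (\<Sum>b\<le>Suc l. of_int (\<beta> b) * F b)"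
  proof -
    have shifted: "(\<Sum>b\<le>Suc l. of_int (if b = 0 then 0 else \<beta>1 (b - 1)) * F b)
        = (\<Sum>b\<le>l. of_int (\<beta>1 b) * F (Suc b))"
      by (subst sum.atMost_Suc_shift) simp
    have truncated: "(\<Sum>b\<le>Suc l. of_int (if b \<le> l then \<beta>2 b else 0) * F b)
        = (\<Sum>b\<le>l. of_int (\<beta>2 b) * F b)"
      by (simp add: sum.atMost_Suc)
    show ?thesis
      unfolding \<beta>1(2) \<beta>2 \<beta>_def of_int_add of_int_mult distrib_right sum.distrib shifted
      by (simp add: mult.assoc truncated flip: sum_distrib_left)
  qed
  finally show ?case
    using \<beta>1(1) by (intro exI[of _ \<beta>]) (simp add: \<beta>_def F_def)
qed

lemma even_binom_ffact2_sum_eq: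
  "2 * even_binom_ffact2_sum i x l =
     binom_ffact2_sum 1 i x l + (if even x then 1 else -1) * binom_ffact2_sum (-1) i x l"
  unfolding even_binom_ffact2_sum_def binom_ffact2_sum_def sum_distrib_left sum.distrib[symmetric]
  by (intro sum.cong refl) (auto simp: algebra_simps)

lemma even_binom_ffact2_sum_expansion:
  assumes "l < i"
  obtains \<beta> :: "nat \<Rightarrow> int" where "\<beta> l = 1"
    "even_binom_ffact2_sum i x l / fact i = (\<Sum>b\<le>l. of_int (\<beta> b) * (2 ^ (i - b - 1) / fact (i - b)))"
proof -
  obtain \<beta> where \<beta>: "\<beta> l = 1"
    "binom_ffact2_sum 1 i x l / fact i = (\<Sum>b\<le>l. of_int (\<beta> b) * 2 ^ (i - b) / fact (i - b))"
    using binom_ffact2_sum_expansion[of l i x] assms by auto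
  have "even_binom_ffact2_sum i x l / fact i = binom_ffact2_sum 1 i x l / fact i / 2"
    using even_binom_ffact2_sum_eq[of i x l] binom_ffact2_sum_alternating_eq_0[OF assms]
    by (simp add: field_simps)
  also have "\<dots> = (\<Sum>b\<le>l. of_int (\<beta> b) * (2 ^ (i - b - 1) / fact (i - b)))"
    unfolding \<beta>(2) sum_divide_distrib
  proof (intro sum.cong refl)
    fix b
    assume "b \<in> {..l}"
    then have "(2::rat) ^ (i - b) = 2 * 2 ^ (i - b - 1)"
      using assms by (simp flip: power_Suc)
    then show "of_int (\<beta> b) * 2 ^ (i - b) / fact (i - b) / 2 =
               of_int (\<beta> b) * (2 ^ (i - b - 1) / fact (i - b) :: rat)"
      by simp
  qed
  finally show ?thesis
    using \<beta>(1) that by blast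
qed

lemma ffact2_double_div_fact_Z2:
  assumes "i \<le> l" "y \<in> \<int>"
  shows "ffact2 l (2 * y) / fact i \<in> Z2"
proof -
  have "ffact2 l (2 * y) / fact i = (\<Prod>u<l. y - of_nat u) * (2 ^ l / fact i)"
    by (simp add: ffact2_double)
  also have "\<dots> \<in> Z2"
    using assms by (intro Z2_mult Z2_Ints Ints_prod Ints_diff two_pow_div_fact_Z2_if_le) auto
  finally show ?thesis .
qed

lemma even_binom_ffact2_sum_Z2: "even_binom_ffact2_sum i x l / fact i \<in> Z2"
proof (cases "l < i")
  case True
  then obtain \<beta> where
    "even_binom_ffact2_sum i x l / fact i = (\<Sum>b\<le>l. of_int (\<beta> b) * (2 ^ (i - b - 1) / fact (i - b)))"
    by (rule even_binom_ffact2_sum_expansion)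
  also have "\<dots> \<in> Z2"
    using True by (intro Z2_sum Z2_mult Z2_of_int two_pow_pred_div_fact_Z2) simp
  finally show ?thesis .
next
  case False
  have "even_binom_ffact2_sum i x l / fact i = (\<Sum>j\<le>i. if even (int j + x)
      then of_nat (i choose j) * (ffact2 l (of_int (int j + x)) / fact i) else 0)"
    unfolding even_binom_ffact2_sum_def sum_divide_distrib by (intro sum.cong refl) simp
  also have "\<dots> \<in> Z2"
  proof (intro Z2_sum)
    fix j
    show "(if even (int j + x) then of_nat (i choose j) * (ffact2 l (of_int (int j + x)) / fact i)
        else 0) \<in> Z2"
    proof (cases "even (int j + x)")
      case True
      then obtain y where "int j + x = 2 * y" ..
      then have "ffact2 l (of_int (int j + x)) / fact i \<in> Z2"
        using False ffact2_double_div_fact_Z2[of i l "of_int y"] by simp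
      then show ?thesis
        unfolding if_P[OF True] by (rule Z2_mult[OF Z2_of_nat])
    qed simp
  qed
  finally show ?thesis .
qed

lemma even_binom_ffact2_sum_cong:
  assumes "d < 2 ^ e" "l \<le> d"
  shows "cong2_rat (even_binom_ffact2_sum (2 ^ e + d) x l / fact (2 ^ e + d)) (if l = d then 1 else 0)"
proof -
  define i where "i = 2 ^ e + d"
  have "d < i"
    unfolding i_def by simp
  with assms(2) have "l < i"
    by simp
  then obtain \<beta> where \<beta>: "\<beta> l = 1"
    "even_binom_ffact2_sum i x l / fact i = (\<Sum>b\<le>l. of_int (\<beta> b) * (2 ^ (i - b - 1) / fact (i - b)))"
    by (rule even_binom_ffact2_sum_expansion)
  have "cong2_rat (2 ^ (i - b - 1) / fact (i - b)) (if b = d then 1 else 0)" if "b \<le> l" for b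
  proof -
    have "i - b = 2 ^ e + (d - b)" "d - b < 2 ^ e"
      using that assms unfolding i_def by auto
    then have "bin_digit_sum (i - b) = Suc (bin_digit_sum (d - b))"
      by (simp only: bin_digit_sum_two_pow_add)
    then have "bin_digit_sum (i - b) = 1 \<longleftrightarrow> b = d"
      using that assms(2) bin_digit_sum_pos[of "d - b"] by fastforce
    then show ?thesis
      using cong2_two_pow_pred_div_fact[of "i - b"] \<open>l < i\<close> that by simp
  qed
  then have "cong2_rat (even_binom_ffact2_sum i x l / fact i)
      (\<Sum>b\<le>l. of_int (\<beta> b) * (if b = d then 1 else 0))"
    unfolding \<beta>(2) by (intro cong2_rat_sum cong2_rat_mult_left) auto
  also have "(\<Sum>b\<le>l. of_int (\<beta> b) * (if b = d then 1 else 0) :: rat) = (if l = d then 1 else 0)"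
    using assms(2) \<beta>(1) by (simp add: if_distrib[of "\<lambda>t. _ * t"] sum.delta' cong: if_cong)
  finally show ?thesis
    unfolding i_def .
qed

section \<open>\<open>T\<close> as a functional on integer polynomials\<close>

definition coeff_sum :: "(nat \<Rightarrow> rat) \<Rightarrow> int poly \<Rightarrow> rat" where
  "coeff_sum w p = (\<Sum>k\<le>degree p. of_int (coeff p k) * w k)"

lemma coeff_sum_eq_sum_atMost:
  "degree p \<le> N \<Longrightarrow> coeff_sum w p = (\<Sum>k\<le>N. of_int (coeff p k) * w k)"
  unfolding coeff_sum_def by (rule sum.mono_neutral_left) (auto simp: coeff_eq_0)

lemma coeff_sum_add: "coeff_sum w (p + q) = coeff_sum w p + coeff_sum w q"
proof -
  define N where "N = max (degree p) (degree q)"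
  have "degree (p + q) \<le> N" "degree p \<le> N" "degree q \<le> N"
    unfolding N_def by (auto intro: degree_add_le)
  then show ?thesis
    by (simp add: coeff_sum_eq_sum_atMost sum.distrib algebra_simps)
qed

lemma coeff_sum_0 [simp]: "coeff_sum w 0 = 0"
  by (simp add: coeff_sum_def)

lemma coeff_sum_sum: "coeff_sum w (\<Sum>i\<in>A. f i) = (\<Sum>i\<in>A. coeff_sum w (f i))"
  by (induction A rule: infinite_finite_induct) (simp_all add: coeff_sum_add)

lemma coeff_sum_smult: "coeff_sum w (smult a p) = of_int a * coeff_sum w p"
  by (simp add: coeff_sum_def sum_distrib_left algebra_simps)

lemma coeff_sum_monom: "coeff_sum w (monom a k) = of_int a * w k"
proof -
  have "coeff_sum w (monom a k) = (\<Sum>j\<le>k. of_int (coeff (monom a k) j) * w j)"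
    by (rule coeff_sum_eq_sum_atMost) (rule degree_monom_le)
  also have "\<dots> = (\<Sum>j\<le>k. if j = k then of_int a * w k else 0)"
    by (rule sum.cong) (auto simp: coeff_monom)
  finally show ?thesis
    by simp
qed

lemma one_plus_monom_power:
  "(1 + monom a s) ^ i = (\<Sum>j\<le>i. monom (of_nat (i choose j) * a ^ j) (s * j))"
proof -
  have "(1 + monom a s) ^ i = (monom a s + 1) ^ i"
    by (simp add: add.commute)
  also have "\<dots> = (\<Sum>j\<le>i. of_nat (i choose j) * monom a s ^ j * 1 ^ (i - j))"
    by (rule binomial_ring)
  also have "\<dots> = (\<Sum>j\<le>i. monom (of_nat (i choose j) * a ^ j) (s * j))"
    by (rule sum.cong) (simp_all add: monom_power of_nat_monom mult_monom)
  finally show ?thesis .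
qed

lemma coeff_sum_one_plus_monom_power_mult:
  "coeff_sum w ((1 + monom a s) ^ i * q) =
     (\<Sum>t\<le>degree q. of_int (coeff q t) * (\<Sum>j\<le>i. of_nat (i choose j) * of_int a ^ j * w (s * j + t)))"
proof -
  have "(1 + monom a s) ^ i * q =
        (\<Sum>j\<le>i. monom (of_nat (i choose j) * a ^ j) (s * j)) * (\<Sum>t\<le>degree q. monom (coeff q t) t)"
    by (simp only: one_plus_monom_power poly_as_sum_of_monoms)
  also have "\<dots> = (\<Sum>j\<le>i. \<Sum>t\<le>degree q. monom (of_nat (i choose j) * a ^ j * coeff q t) (s * j + t))"
    by (simp add: sum_product mult_monom)
  finally have "coeff_sum w ((1 + monom a s) ^ i * q) =
        (\<Sum>j\<le>i. \<Sum>t\<le>degree q. of_nat (i choose j) * of_int a ^ j * of_int (coeff q t) * w (s * j + t))"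
    by (simp add: coeff_sum_sum coeff_sum_monom)
  also have "\<dots> = (\<Sum>t\<le>degree q. of_int (coeff q t) *
      (\<Sum>j\<le>i. of_nat (i choose j) * of_int a ^ j * w (s * j + t)))"
    by (subst sum.swap) (simp add: sum_distrib_left algebra_simps)
  finally show ?thesis .
qed

lemma one_minus_X_pow_two_pow:
  "\<exists>h. (1 + monom (-1) 1 :: int poly) ^ 2 ^ a = 1 + monom 1 (2 ^ a) + smult 2 h"
proof (induction a)
  case 0
  show ?case
    by (rule exI[of _ "monom (-1) 1"]) (simp add: smult_monom add.assoc add_monom)
next
  case (Suc a)
  then obtain h where h: "(1 + monom (-1) 1 :: int poly) ^ 2 ^ a = 1 + monom 1 (2 ^ a) + smult 2 h"
    by blast
  define X where "X = monom (1::int) (2 ^ a)"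
  have "(2::nat) ^ Suc a = 2 ^ a * 2"
    by simp
  then have "(1 + monom (-1) 1 :: int poly) ^ 2 ^ Suc a = (1 + X + smult 2 h) ^ 2"
    by (simp only: power_mult h X_def)
  also have "\<dots> = 1 + X * X + smult 2 (X + smult 2 (h + X * h + h * h))"
    by (simp add: power2_eq_square algebra_simps flip: numeral_mult_conv_smult)
  also have "X * X = monom 1 (2 ^ Suc a)"
    by (simp add: X_def mult_monom mult_2)
  finally show ?case
    by blast
qed

definition T2_weight :: "nat \<Rightarrow> int \<Rightarrow> nat \<Rightarrow> nat \<Rightarrow> rat" where
  "T2_weight \<beta> r l k = (if [int k = r] (mod 2 ^ \<beta>)
     then fact l * 2 ^ l * (of_int ((int k - r) div 2 ^ \<beta>) gchoose l) else 0)"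

lemma T2_eq_coeff_sum:
  "T2 l \<beta> n r = coeff_sum (T2_weight \<beta> r l) ((1 + monom (-1) 1) ^ n) / fact (n div 2 ^ (\<beta> - 1))"
proof -
  have "coeff_sum (T2_weight \<beta> r l) ((1 + monom (-1) 1) ^ n) =
        (\<Sum>k\<le>n. of_nat (n choose k) * (-1) ^ k * T2_weight \<beta> r l k)"
    using coeff_sum_one_plus_monom_power_mult[of "T2_weight \<beta> r l" "-1" 1 n 1] by simp
  also have "\<dots> = fact l * 2 ^ l * (\<Sum>k \<in> {k \<in> {0..n}. [int k = r] (mod 2 ^ \<beta>)}.
        of_nat (n choose k) * (-1) ^ k * (of_int ((int k - r) div 2 ^ \<beta>) gchoose l))"
    unfolding atLeast0AtMost sum.inter_filter[OF finite_atMost] sum_distrib_left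
    by (intro sum.cong refl) (simp add: T2_weight_def)
  finally show ?thesis
    by (simp add: T2_def)
qed

lemma T2_weight_not_dvd:
  assumes "\<not> 2 ^ \<alpha> dvd t"
  shows "T2_weight (\<alpha> + 1) (2 ^ \<alpha> * c) l (2 ^ \<alpha> * j + t) = 0"
proof (rule ccontr)
  assume "T2_weight (\<alpha> + 1) (2 ^ \<alpha> * c) l (2 ^ \<alpha> * j + t) \<noteq> 0"
  then have "(2::int) ^ (\<alpha> + 1) dvd int (2 ^ \<alpha> * j + t) - 2 ^ \<alpha> * c"
    by (auto simp: T2_weight_def cong_iff_dvd_diff split: if_splits)
  then have "(2::int) ^ \<alpha> dvd 2 ^ \<alpha> * (int j - c) + int t"
    by (auto simp: algebra_simps elim: dvd_mult_left)
  then have "int (2 ^ \<alpha>) dvd int t"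
    by (simp add: dvd_add_right_iff)
  with assms show False
    by (simp only: int_dvd_int_iff)
qed

lemma T2_weight_multiple:
  "T2_weight (\<alpha> + 1) (2 ^ \<alpha> * c) l (2 ^ \<alpha> * j + 2 ^ \<alpha> * \<tau>) =
     (if even (int j + (int \<tau> - c)) then ffact2 l (of_int (int j + (int \<tau> - c))) else 0)"
proof -
  define x where "x = int j + (int \<tau> - c)"
  have diff: "int (2 ^ \<alpha> * j + 2 ^ \<alpha> * \<tau>) - 2 ^ \<alpha> * c = 2 ^ \<alpha> * x"
    unfolding x_def by (simp add: algebra_simps)
  have "T2_weight (\<alpha> + 1) (2 ^ \<alpha> * c) l (2 ^ \<alpha> * j + 2 ^ \<alpha> * \<tau>) =
        (if even x then fact l * 2 ^ l * (of_int (x div 2) gchoose l) else 0)"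
    unfolding T2_weight_def cong_iff_dvd_diff diff by simp
  also have "\<dots> = (if even x then ffact2 l (of_int x) else 0)"
  proof (cases "even x")
    case True
    then obtain y where "x = 2 * y" ..
    then show ?thesis
      by (simp add: ffact2_double gbinomial_mult_fact atLeast0LessThan)
  qed simp
  finally show ?thesis
    unfolding x_def .
qed

lemma coeff_sum_T2_weight_Z2:
  "coeff_sum (T2_weight (\<alpha> + 1) (2 ^ \<alpha> * c) l) ((1 + monom 1 (2 ^ \<alpha>)) ^ i * q) / fact i \<in> Z2"
proof -
  have inner: "(\<Sum>j\<le>i. of_nat (i choose j) * T2_weight (\<alpha> + 1) (2 ^ \<alpha> * c) l (2 ^ \<alpha> * j + t)) / fact i \<in> Z2"
    for t
  proof (cases "2 ^ \<alpha> dvd t")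
    case True
    then obtain \<tau> where t: "t = 2 ^ \<alpha> * \<tau>" ..
    have "(\<Sum>j\<le>i. of_nat (i choose j) * T2_weight (\<alpha> + 1) (2 ^ \<alpha> * c) l (2 ^ \<alpha> * j + t)) =
               even_binom_ffact2_sum i (int \<tau> - c) l"
      unfolding t even_binom_ffact2_sum_def T2_weight_multiple
      by (intro sum.cong refl) (simp only: if_distrib[of "\<lambda>y. _ * y"] mult_zero_right)
    then show ?thesis
      using even_binom_ffact2_sum_Z2 by simp
  next
    case False
    then show ?thesis
      using T2_weight_not_dvd[of \<alpha> t c l] by simp
  qed
  show ?thesis
    unfolding coeff_sum_one_plus_monom_power_mult sum_divide_distrib
  proof (intro Z2_sum)
    fix t
    show "of_int (coeff q t) * (\<Sum>j\<le>i. of_nat (i choose j) * of_int 1 ^ j *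
        T2_weight (\<alpha> + 1) (2 ^ \<alpha> * c) l (2 ^ \<alpha> * j + t)) / fact i \<in> Z2"
      using Z2_mult[OF Z2_of_int inner, of "coeff q t" t] by simp
  qed
qed

lemma coeff_sum_T2_weight:
  "coeff_sum (T2_weight (\<alpha> + 1) (2 ^ \<alpha> * c) l) ((1 + monom 1 (2 ^ \<alpha>)) ^ i) =
     even_binom_ffact2_sum i (- c) l"
  using coeff_sum_one_plus_monom_power_mult[of _ 1 "2 ^ \<alpha>" i 1]
    T2_weight_multiple[of \<alpha> c l _ 0]
  by (simp add: even_binom_ffact2_sum_def if_distrib[of "\<lambda>y. _ * y"] cong: if_cong)

lemma power_add_smult:
  fixes p q :: "'a::comm_ring_1 poly"
  shows "(p + smult c q) ^ m = (\<Sum>i\<le>m. smult (of_nat (m choose i) * c ^ (m - i)) (p ^ i * q ^ (m - i)))"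
  unfolding binomial_ring[of p]
  by (intro sum.cong refl) (simp add: smult_power of_nat_poly mult_smult_right mult.commute)

lemma binomial_div_fact:
  assumes "i \<le> m"
  shows "of_nat (m choose i) * x / fact m = x / (fact (m - i) * fact i :: rat)"
proof -
  have "(fact m :: rat) = fact i * fact (m - i) * of_nat (m choose i)"
    using arg_cong[OF binomial_fact_lemma[OF assms], of "of_nat :: nat \<Rightarrow> rat"] by simp
  moreover have "m choose i \<noteq> 0"
    using assms by simp
  ultimately show ?thesis
    by simp
qed

lemma coeff_sum_one_minus_X_cong:
  assumes integral: "\<And>i q. coeff_sum w ((1 + monom 1 (2 ^ a)) ^ i * q) / fact i \<in> Z2"
  shows "cong2_rat (coeff_sum w ((1 + monom (-1) 1) ^ (2 ^ a * m)) / fact m)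
                   (coeff_sum w ((1 + monom 1 (2 ^ a)) ^ m) / fact m)"
proof -
  define A :: "int poly" where "A = 1 + monom 1 (2 ^ a)"
  obtain h where h: "(1 + monom (-1) 1 :: int poly) ^ 2 ^ a = A + smult 2 h"
    using one_minus_X_pow_two_pow[of a] unfolding A_def by blast
  define z where "z i = coeff_sum w (A ^ i * h ^ (m - i)) / fact i" for i
  have expansion: "(1 + monom (-1) 1 :: int poly) ^ (2 ^ a * m) = (A + smult 2 h) ^ m"
    by (simp only: power_mult h)
  have "coeff_sum w ((1 + monom (-1) 1) ^ (2 ^ a * m)) / fact m =
      (\<Sum>i\<le>m. 2 ^ (m - i) / fact (m - i) * z i)"
    unfolding expansion power_add_smult coeff_sum_sum coeff_sum_smult sum_divide_distrib z_def
    by (intro sum.cong refl) (simp add: binomial_div_fact mult.assoc)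
  also have "cong2_rat \<dots> (\<Sum>i\<le>m. if i = m then z m else 0)"
  proof (intro cong2_rat_sum)
    fix i
    assume "i \<in> {..m}"
    moreover have "z i \<in> Z2"
      unfolding z_def A_def by (rule integral)
    ultimately show "cong2_rat (2 ^ (m - i) / fact (m - i) * z i) (if i = m then z m else 0)"
      using cong2_two_pow_div_fact_mult[of "m - i" "z i"] by (cases "i = m") simp_all
  qed
  finally show ?thesis
    by (simp add: z_def A_def)
qed

theorem theorem4p1:
  fixes \<alpha> c d e l :: nat
  assumes "d < 2 ^ e" and "l \<le> d"
  shows "cong2_rat (T2 l (\<alpha> + 1) (2 ^ \<alpha> * (2 ^ e + d)) (2 ^ \<alpha> * int c))
                   (if l = d then 1 else 0)"
proof -
  define m where "m = 2 ^ e + d"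
  define w where "w = T2_weight (\<alpha> + 1) (2 ^ \<alpha> * int c) l"
  have "T2 l (\<alpha> + 1) (2 ^ \<alpha> * m) (2 ^ \<alpha> * int c) =
        coeff_sum w ((1 + monom (-1) 1) ^ (2 ^ \<alpha> * m)) / fact m"
    unfolding w_def by (simp add: T2_eq_coeff_sum)
  also have "cong2_rat \<dots> (coeff_sum w ((1 + monom 1 (2 ^ \<alpha>)) ^ m) / fact m)"
    unfolding w_def by (intro coeff_sum_one_minus_X_cong coeff_sum_T2_weight_Z2)
  also have "coeff_sum w ((1 + monom 1 (2 ^ \<alpha>)) ^ m) = even_binom_ffact2_sum m (- int c) l"
    unfolding w_def by (rule coeff_sum_T2_weight)
  also have "cong2_rat (even_binom_ffact2_sum m (- int c) l / fact m) (if l = d then 1 else 0)"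
    unfolding m_def using assms by (rule even_binom_ffact2_sum_cong)
  finally show ?thesis
    unfolding m_def .
qed

end
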